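(* If $\mathfrak W$ is a bracket pattern category, then $\bigcup_{w\in\mathfrak W}A(w)=\{\|w\|\mid w\in\mathfrak W\}$.
   Context: $\mathbb N=\{1,2,\dots\}$, $\mathbb N_0=\mathbb N\cup\{0\}$. A bracket pattern is a non-empty finite subset $w\subseteq\mathbb N$; $\|w\|:=\max(w)$. For bracket patterns $w,w'$: superposition $w\cup w'$; for $j\in w$ the projection $\cap_j w:=\{i\in w\mid i\le j\}$; the dual $w^\dagger:=\{\|w\|-i\mid i\in\mathbb N_0,\ i<\|w\|,\ i\notin w\}$. A bracket pattern category is a (possibly empty) set of bracket patterns closed under superposition, duals and projections. The completion of a bracket pattern $w$ is $A(w):=\{j-i\mid j\in w,\ i\in\mathbb N_0,\ i\notin w,\ i<j\}$. *)

theory Defs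
  imports Main
begin

definition bracket_pattern :: "nat set \<Rightarrow> bool" where
  "bracket_pattern w \<longleftrightarrow> finite w \<and> w \<noteq> {} \<and> 0 \<notin> w"

definition bnorm :: "nat set \<Rightarrow> nat" where
  "bnorm w = Max w"

definition bproj :: "nat \<Rightarrow> nat set \<Rightarrow> nat set" where
  "bproj j w = {i \<in> w. i \<le> j}"

definition bdual :: "nat set \<Rightarrow> nat set" where
  "bdual w = {bnorm w - i | i. i < bnorm w \<and> i \<notin> w}"

text \<open>Closure under duals is required whenever the dual is again a bracket
pattern, i.e. non-empty (the dual of a pattern of the form 1..n is empty).\<close>
definition bracket_pattern_category :: "nat set set \<Rightarrow> bool" where
  "bracket_pattern_category W \<longleftrightarrow>
     (\<forall>w\<in>W. bracket_pattern w) \<and>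
     (\<forall>w\<in>W. \<forall>w'\<in>W. w \<union> w' \<in> W) \<and>
     (\<forall>w\<in>W. bdual w \<noteq> {} \<longrightarrow> bdual w \<in> W) \<and>
     (\<forall>w\<in>W. \<forall>j\<in>w. bproj j w \<in> W)"

definition completion :: "nat set \<Rightarrow> nat set" where
  "completion w = {j - i | j i. j \<in> w \<and> i \<notin> w \<and> i < j}"

end

theory Submission
  imports Defs
begin

text \<open>The norm of \<open>w\<close> lies in \<open>A(w)\<close> as \<open>\<parallel>w\<parallel> - 0\<close>. Conversely, \<open>A(w)\<close> is the union of
the duals of the projections \<open>\<inter>\<^sub>j w\<close>, \<open>j \<in> w\<close>, which belong to the category, and every
element \<open>x\<close> of a pattern \<open>v\<close> of the category is the norm of the projection \<open>\<inter>\<^sub>x v\<close>.\<close>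

lemma bnorm_bproj:
  assumes "finite w" "j \<in> w"
  shows "bnorm (bproj j w) = j"
  unfolding bnorm_def bproj_def by (rule Max_eqI) (use assms in auto)

lemma bdual_bproj:
  assumes "finite w" "j \<in> w"
  shows "bdual (bproj j w) = (\<lambda>i. j - i) ` {i. i < j \<and> i \<notin> w}"
  unfolding bdual_def bnorm_bproj[OF assms] by (auto simp: bproj_def)

lemma completion_eq_UN_bdual_bproj:
  assumes "finite w"
  shows "completion w = (\<Union>j\<in>w. bdual (bproj j w))"
  using bdual_bproj[OF assms] unfolding completion_def by auto

lemma bnorm_in_completion:
  assumes "bracket_pattern w"
  shows "bnorm w \<in> completion w"
proof -
  have "Max w \<in> w" "0 \<notin> w"
    using assms by (auto simp: bracket_pattern_def)
  then have "Max w - 0 \<in> completion w"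
    unfolding completion_def by (intro CollectI exI conjI) (auto intro: gr0I)
  then show ?thesis
    by (simp add: bnorm_def)
qed

lemma bracket_pattern_category_subset_bnorm_image:
  assumes "bracket_pattern_category W" "v \<in> W"
  shows "v \<subseteq> bnorm ` W"
proof
  fix x assume "x \<in> v"
  with assms have "bproj x v \<in> W" "finite v"
    by (auto simp: bracket_pattern_category_def bracket_pattern_def)
  with \<open>x \<in> v\<close> show "x \<in> bnorm ` W"
    by (metis bnorm_bproj image_eqI)
qed

lemma completion_subset_bnorm_image:
  assumes W: "bracket_pattern_category W" and "w \<in> W"
  shows "completion w \<subseteq> bnorm ` W"
proof -
  have "finite w"
    using assms by (auto simp: bracket_pattern_category_def bracket_pattern_def)
  have "bdual (bproj j w) \<subseteq> bnorm ` W" if "j \<in> w" for j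
  proof (cases "bdual (bproj j w) = {}")
    case False
    have "bproj j w \<in> W"
      using W \<open>w \<in> W\<close> \<open>j \<in> w\<close> by (auto simp: bracket_pattern_category_def)
    with False W have "bdual (bproj j w) \<in> W"
      by (auto simp: bracket_pattern_category_def)
    with W show ?thesis
      by (rule bracket_pattern_category_subset_bnorm_image)
  qed simp
  then show ?thesis
    unfolding completion_eq_UN_bdual_bproj[OF \<open>finite w\<close>] by blast
qed

theorem proposition7p7:
  assumes "bracket_pattern_category W"
  shows "(\<Union>w\<in>W. completion w) = bnorm ` W"
proof
  show "(\<Union>w\<in>W. completion w) \<subseteq> bnorm ` W"
    using completion_subset_bnorm_image[OF assms] by blast
  have "bracket_pattern w" if "w \<in> W" for w
    using assms that by (simp add: bracket_pattern_category_def)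
  then show "bnorm ` W \<subseteq> (\<Union>w\<in>W. completion w)"
    using bnorm_in_completion by blast
qed

end
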